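(* Let $X$ be a topological group with identity $e$, equipped with a proper length function $\ell:X\to[0,\infty)$. Let $\mathcal H$ be a Hilbert space, let $U:X\to\mathcal U(\mathcal H)$ be a unitary representation of $X$, and let $\{x_j\}_{j\in J}$ be a net in $X$ with $x_j\to\infty$. Assume there exists a self-adjoint operator $A$ in $\mathcal H$ such that $U(x_j)\in C^1(A)$ for each $j\in J$, and suppose that the strong limit $$D:=\operatorname{s-lim}_j\frac{1}{\ell(x_j)}[A,U(x_j)]U(x_j)^{-1}$$ exists. Then: (a) $\lim_j\langle\varphi,U(x_j)\psi\rangle=0$ for all $\varphi\in\ker(D)^\perp$ and $\psi\in\mathcal H$; (b) $U$ has no nontrivial finite-dimensional unitary subrepresentation in $\ker(D)^\perp$, i.e. there is no nonzero finite-dimensional subspace of $\ker(D)^\perp$ invariant under all $U(x)$, $x\in X$.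
   Context: $\mathcal U(\mathcal H)$ is the group of unitary operators on $\mathcal H$; the scalar product is antilinear in the first argument. A proper length function is a map $\ell:X\to[0,\infty)$ with: (L1) $\ell(e)=0$; (L2) $\ell(x^{-1})=\ell(x)$ for all $x$; (L3) $\ell(xy)\le\ell(x)+\ell(y)$ for all $x,y$; (L4) for every compact $K\subset[0,\infty)$, $\ell^{-1}(K)$ is relatively compact in $X$. A net $\{x_j\}$ in $X$ diverges to infinity ($x_j\to\infty$) if it has no limit (cluster) point in $X$. For a self-adjoint operator $A$ and bounded $S$, $S\in C^1(A)$ means $t\mapsto e^{-itA}Se^{itA}$ is strongly $C^1$; equivalently the form $\mathrm{dom}(A)\ni\varphi\mapsto\langle A\varphi,S\varphi\rangle-\langle\varphi,SA\varphi\rangle$ is continuous for the topology of $\mathcal H$, and $[A,S]$ denotes the bounded operator associated with its continuous extension. *)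

theory Defs
  imports "HOL-Analysis.Analysis" "HOL-Algebra.Group"
begin

text \<open>A complex Hilbert space is modelled as a real Banach space type 'h together with a
complex scalar multiplication sc (extending the real one) and a complex inner product ip,
antilinear in the first argument, whose associated norm is the norm of 'h.
Completeness comes from the class banach.\<close>

definition complex_hilbert :: "(complex \<Rightarrow> 'h::banach \<Rightarrow> 'h) \<Rightarrow> ('h \<Rightarrow> 'h \<Rightarrow> complex) \<Rightarrow> bool" where
  "complex_hilbert sc ip \<longleftrightarrow>
     (\<forall>x. sc 1 x = x) \<and>
     (\<forall>a b x. sc a (sc b x) = sc (a * b) x) \<and>
     (\<forall>a x y. sc a (x + y) = sc a x + sc a y) \<and>
     (\<forall>a b x. sc (a + b) x = sc a x + sc b x) \<and>
     (\<forall>r x. sc (complex_of_real r) x = r *\<^sub>R x) \<and>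
     (\<forall>x y z. ip x (y + z) = ip x y + ip x z) \<and>
     (\<forall>a x y. ip x (sc a y) = a * ip x y) \<and>
     (\<forall>x y. ip y x = cnj (ip x y)) \<and>
     (\<forall>x. ip x x = complex_of_real ((norm x)\<^sup>2))"

definition bounded_op :: "(complex \<Rightarrow> 'h::banach \<Rightarrow> 'h) \<Rightarrow> ('h \<Rightarrow> 'h) \<Rightarrow> bool" where
  "bounded_op sc T \<longleftrightarrow>
     (\<forall>x y. T (x + y) = T x + T y) \<and> (\<forall>a x. T (sc a x) = sc a (T x)) \<and>
     (\<exists>C. \<forall>x. norm (T x) \<le> C * norm x)"

definition unitary_op :: "(complex \<Rightarrow> 'h::banach \<Rightarrow> 'h) \<Rightarrow> ('h \<Rightarrow> 'h \<Rightarrow> complex) \<Rightarrow> ('h \<Rightarrow> 'h) \<Rightarrow> bool" where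
  "unitary_op sc ip T \<longleftrightarrow> bounded_op sc T \<and> surj T \<and> (\<forall>x y. ip (T x) (T y) = ip x y)"

text \<open>Self-adjoint (possibly unbounded) operator A with domain DA: DA is a dense complex
subspace, A is linear on DA, and A equals its adjoint A*.\<close>

definition self_adjoint :: "(complex \<Rightarrow> 'h::banach \<Rightarrow> 'h) \<Rightarrow> ('h \<Rightarrow> 'h \<Rightarrow> complex) \<Rightarrow> 'h set \<Rightarrow> ('h \<Rightarrow> 'h) \<Rightarrow> bool" where
  "self_adjoint sc ip DA A \<longleftrightarrow>
     0 \<in> DA \<and> (\<forall>x\<in>DA. \<forall>y\<in>DA. x + y \<in> DA) \<and> (\<forall>a. \<forall>x\<in>DA. sc a x \<in> DA) \<and>
     closure DA = UNIV \<and>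
     (\<forall>x\<in>DA. \<forall>y\<in>DA. A (x + y) = A x + A y) \<and> (\<forall>a. \<forall>x\<in>DA. A (sc a x) = sc a (A x)) \<and>
     (\<forall>y. y \<in> DA \<longleftrightarrow> (\<exists>z. \<forall>x\<in>DA. ip (A x) y = ip x z)) \<and>
     (\<forall>x\<in>DA. \<forall>y\<in>DA. ip (A x) y = ip x (A y))"

text \<open>S \<in> C^1(A): the form phi |-> <A phi, S phi> - <phi, S A phi> on dom(A) is continuous
for the topology of H, i.e. bounded by c * norm(phi)^2.\<close>

definition in_C1 :: "(complex \<Rightarrow> 'h::banach \<Rightarrow> 'h) \<Rightarrow> ('h \<Rightarrow> 'h \<Rightarrow> complex) \<Rightarrow> 'h set \<Rightarrow> ('h \<Rightarrow> 'h) \<Rightarrow> ('h \<Rightarrow> 'h) \<Rightarrow> bool" where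
  "in_C1 sc ip DA A S \<longleftrightarrow> bounded_op sc S \<and>
     (\<exists>c. \<forall>\<phi>\<in>DA. cmod (ip (A \<phi>) (S \<phi>) - ip \<phi> (S (A \<phi>))) \<le> c * (norm \<phi>)\<^sup>2)"

text \<open>[A,S]: the bounded operator associated with the continuous extension of that form.\<close>

definition commutator :: "(complex \<Rightarrow> 'h::banach \<Rightarrow> 'h) \<Rightarrow> ('h \<Rightarrow> 'h \<Rightarrow> complex) \<Rightarrow> 'h set \<Rightarrow> ('h \<Rightarrow> 'h) \<Rightarrow> ('h \<Rightarrow> 'h) \<Rightarrow> ('h \<Rightarrow> 'h)" where
  "commutator sc ip DA A S = (THE B. bounded_op sc B \<and>
     (\<forall>\<phi>\<in>DA. ip \<phi> (B \<phi>) = ip (A \<phi>) (S \<phi>) - ip \<phi> (S (A \<phi>))))"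

definition kernel_perp :: "('h \<Rightarrow> 'h \<Rightarrow> complex) \<Rightarrow> ('h::banach \<Rightarrow> 'h) \<Rightarrow> 'h set" where
  "kernel_perp ip D = {\<phi>. \<forall>v. D v = 0 \<longrightarrow> ip v \<phi> = 0}"

definition cspan :: "(complex \<Rightarrow> 'h::banach \<Rightarrow> 'h) \<Rightarrow> 'h set \<Rightarrow> 'h set" where
  "cspan sc B = {y. \<exists>f. y = (\<Sum>b\<in>B. sc (f b) b)}"

definition topological_group :: "('g, 'b) monoid_scheme \<Rightarrow> 'g topology \<Rightarrow> bool" where
  "topological_group G T \<longleftrightarrow> group G \<and> topspace T = carrier G \<and>
     continuous_map (prod_topology T T) T (\<lambda>(x, y). x \<otimes>\<^bsub>G\<^esub> y) \<and>
     continuous_map T T (m_inv G)"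

definition proper_length :: "('g, 'b) monoid_scheme \<Rightarrow> 'g topology \<Rightarrow> ('g \<Rightarrow> real) \<Rightarrow> bool" where
  "proper_length G T len \<longleftrightarrow>
     (\<forall>x\<in>carrier G. len x \<ge> 0) \<and>
     len \<one>\<^bsub>G\<^esub> = 0 \<and>
     (\<forall>x\<in>carrier G. len (m_inv G x) = len x) \<and>
     (\<forall>x\<in>carrier G. \<forall>y\<in>carrier G. len (x \<otimes>\<^bsub>G\<^esub> y) \<le> len x + len y) \<and>
     (\<forall>K. compact K \<and> K \<subseteq> {0..} \<longrightarrow>
        compactin T (T closure_of {x\<in>carrier G. len x \<in> K}))"

definition unitary_rep :: "('g, 'b) monoid_scheme \<Rightarrow> 'g topology \<Rightarrow> (complex \<Rightarrow> 'h::banach \<Rightarrow> 'h) \<Rightarrow> ('h \<Rightarrow> 'h \<Rightarrow> complex) \<Rightarrow> ('g \<Rightarrow> 'h \<Rightarrow> 'h) \<Rightarrow> bool" where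
  "unitary_rep G T sc ip U \<longleftrightarrow>
     (\<forall>x\<in>carrier G. unitary_op sc ip (U x)) \<and>
     U \<one>\<^bsub>G\<^esub> = id \<and>
     (\<forall>x\<in>carrier G. \<forall>y\<in>carrier G. U (x \<otimes>\<^bsub>G\<^esub> y) = U x \<circ> U y) \<and>
     (\<forall>\<psi>. continuous_map T euclidean (\<lambda>x. U x \<psi>))"

text \<open>A net (given as a filter F on the index type) in X diverges to infinity:
it has no cluster point in X.\<close>
definition diverges_to_infinity :: "'g topology \<Rightarrow> ('j \<Rightarrow> 'g) \<Rightarrow> 'j filter \<Rightarrow> bool" where
  "diverges_to_infinity T x F \<longleftrightarrow>
     (\<forall>p\<in>topspace T. \<not> (\<forall>V. openin T V \<and> p \<in> V \<longrightarrow> (\<exists>\<^sub>F j in F. x j \<in> V)))"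

end

theory Submission
  imports Defs
begin

text \<open>
  For S \<in> C^1(A) the form \<langle>A\<phi>, S\<psi>\<rangle> - \<langle>\<phi>, S A\<psi>\<rangle> is sesquilinear and bounded on its diagonal,
  hence (by polarisation and the Riesz representation theorem) given by a bounded operator [A, S].
  For unitary U = U(x_j) the operator [A, U] U^-1 = A - U A U^-1 is symmetric, so D is symmetric
  too. For \<phi>, \<psi> \<in> dom A,
    \<langle>D_j \<phi>, U \<psi>\<rangle> = \<langle>\<phi>, [A, U] \<psi>\<rangle> / len(x_j) = O(1 / len(x_j)),
  and len(x_j) \<rightarrow> \<infinity> since the net leaves every compact sublevel set of len; hence
  \<langle>D\<phi>, U(x_j)\<psi>\<rangle> \<rightarrow> 0. The vectors whose matrix coefficients vanish along the net form a closed
  subspace; it contains the range of D and therefore its closure, which by symmetry of D is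
  ker(D)^\<bottom>. For (b), expanding U(x_j)\<psi> in an orthonormal basis of a finite-dimensional invariant
  subspace of ker(D)^\<bottom> shows U(x_j)\<psi> \<rightarrow> 0, which is impossible for a unitary unless \<psi> = 0.
\<close>

lemma eq_on_dense:
  assumes "closure D = UNIV" "continuous_on UNIV f" "continuous_on UNIV g" "\<And>x. x \<in> D \<Longrightarrow> f x = g x"
  shows "f x = (g x :: 'b::t2_space)"
proof -
  have "closed {x. f x = g x}" using assms by (intro closed_Collect_eq)
  moreover have "D \<subseteq> {x. f x = g x}" using assms by auto
  ultimately have "closure D \<subseteq> {x. f x = g x}" by (rule closure_minimal[rotated])
  then show ?thesis using assms(1) by auto
qed

lemma tendsto_zero_if_uniformly_approximable:
  fixes f :: "'j \<Rightarrow> 'a::real_normed_vector"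
  assumes "\<And>e. e > 0 \<Longrightarrow> \<exists>g. (g \<longlongrightarrow> 0) F \<and> (\<forall>j. norm (f j - g j) \<le> e)"
  shows "(f \<longlongrightarrow> 0) F"
proof (rule tendstoI)
  fix e :: real assume e: "e > 0"
  obtain g where g: "(g \<longlongrightarrow> 0) F" "\<And>j. norm (f j - g j) \<le> e / 2"
    using assms[of "e/2"] e by auto
  have "eventually (\<lambda>j. dist (g j) 0 < e / 2) F" using g(1) e by (intro tendstoD) auto
  then show "eventually (\<lambda>j. dist (f j) 0 < e) F"
  proof (rule eventually_mono)
    fix j assume "dist (g j) 0 < e / 2"
    moreover have "norm (f j) \<le> norm (f j - g j) + norm (g j)"
      using norm_triangle_ineq[of "f j - g j" "g j"] by simp
    ultimately show "dist (f j) 0 < e" using g(2)[of j] by simp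
  qed
qed

lemma compactin_frequently_imp_cluster_point:
  assumes C: "compactin T C" and fr: "\<exists>\<^sub>F j in F. x j \<in> C"
  shows "\<exists>p\<in>C. \<forall>V. openin T V \<and> p \<in> V \<longrightarrow> (\<exists>\<^sub>F j in F. x j \<in> V)"
proof (rule ccontr)
  define \<U> where "\<U> = {V. openin T V \<and> eventually (\<lambda>j. x j \<notin> V) F}"
  assume "\<not> ?thesis"
  then have "C \<subseteq> \<Union>\<U>" by (auto simp: \<U>_def not_frequently)
  moreover have "\<forall>U\<in>\<U>. openin T U" by (auto simp: \<U>_def)
  ultimately obtain \<F> where \<F>: "finite \<F>" "\<F> \<subseteq> \<U>" "C \<subseteq> \<Union>\<F>"
    using C unfolding compactin_def by meson
  have "eventually (\<lambda>j. \<forall>V\<in>\<F>. x j \<notin> V) F"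
    using \<F>(1,2) by (intro eventually_ball_finite) (auto simp: \<U>_def)
  then have "eventually (\<lambda>j. x j \<notin> C) F"
    by (rule eventually_mono) (use \<F>(3) in blast)
  with fr show False by (simp add: not_frequently[symmetric])
qed

lemma proper_length_tendsto_at_top:
  assumes "topological_group G T" and proper: "proper_length G T len"
    and "\<forall>j. x j \<in> carrier G" and "diverges_to_infinity T x F"
  shows "filterlim (\<lambda>j. len (x j)) at_top F"
  unfolding filterlim_at_top
proof (rule allI, rule ccontr)
  fix M :: real
  define C where "C = T closure_of {y\<in>carrier G. len y \<in> {0..M}}"
  have sub: "{y\<in>carrier G. len y \<in> {0..M}} \<subseteq> C"
    unfolding C_def using assms(1) by (intro closure_of_subset) (auto simp: topological_group_def)
  assume "\<not> eventually (\<lambda>j. M \<le> len (x j)) F"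
  then have "\<exists>\<^sub>F j in F. len (x j) < M" by (simp add: not_eventually not_le)
  then have "\<exists>\<^sub>F j in F. x j \<in> C"
    by (rule frequently_elim1) (use assms(3) proper sub in \<open>auto simp: proper_length_def\<close>)
  moreover have C: "compactin T C" using proper by (auto simp: C_def proper_length_def)
  ultimately obtain p where "p \<in> C" "\<forall>V. openin T V \<and> p \<in> V \<longrightarrow> (\<exists>\<^sub>F j in F. x j \<in> V)"
    using compactin_frequently_imp_cluster_point by blast
  moreover have "p \<in> topspace T" using C \<open>p \<in> C\<close> by (auto simp: compactin_def)
  ultimately show False using assms(4) by (auto simp: diverges_to_infinity_def)
qed

section \<open>Complex Hilbert spaces\<close>

locale hilbert_space =
  fixes sc :: "complex \<Rightarrow> 'h::banach \<Rightarrow> 'h" and ip :: "'h \<Rightarrow> 'h \<Rightarrow> complex"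
  assumes hilbert: "complex_hilbert sc ip"
begin

lemma sc_one[simp]: "sc 1 x = x" using hilbert unfolding complex_hilbert_def by metis
lemma sc_mult: "sc a (sc b x) = sc (a * b) x" using hilbert unfolding complex_hilbert_def by blast
lemma sc_add_right: "sc a (x + y) = sc a x + sc a y" using hilbert unfolding complex_hilbert_def by blast
lemma sc_add_left: "sc (a + b) x = sc a x + sc b x" using hilbert unfolding complex_hilbert_def by blast
lemma sc_of_real: "sc (complex_of_real r) x = r *\<^sub>R x" using hilbert unfolding complex_hilbert_def by blast
lemma ip_add_right: "ip x (y + z) = ip x y + ip x z" using hilbert unfolding complex_hilbert_def by blast
lemma ip_sc_right: "ip x (sc a y) = a * ip x y" using hilbert unfolding complex_hilbert_def by blast
lemma ip_cnj: "ip y x = cnj (ip x y)" using hilbert unfolding complex_hilbert_def by blast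
lemma ip_self: "ip x x = complex_of_real ((norm x)\<^sup>2)" using hilbert unfolding complex_hilbert_def by blast

lemma ip_add_left: "ip (x + y) z = ip x z + ip y z"
  by (metis ip_cnj ip_add_right complex_cnj_add)
lemma ip_sc_left: "ip (sc a x) y = cnj a * ip x y"
  by (metis ip_cnj ip_sc_right complex_cnj_mult)
lemma ip_scaleR_right: "ip x (r *\<^sub>R y) = r *\<^sub>R ip x y"
  by (metis ip_sc_right sc_of_real scaleR_conv_of_real)
lemma ip_scaleR_left: "ip (r *\<^sub>R x) y = r *\<^sub>R ip x y"
  by (metis ip_sc_left sc_of_real scaleR_conv_of_real complex_cnj_complex_of_real)
lemma ip_zero_right[simp]: "ip x 0 = 0"
  by (metis ip_scaleR_right scaleR_zero_left)
lemma ip_zero_left[simp]: "ip 0 x = 0"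
  by (metis ip_scaleR_left scaleR_zero_left)
lemma ip_minus_right: "ip x (- y) = - ip x y"
  by (metis add.inverse_unique ip_add_right ip_zero_right add.right_inverse)
lemma ip_minus_left: "ip (- x) y = - ip x y"
  by (metis add.inverse_unique ip_add_left ip_zero_left add.right_inverse)
lemma ip_diff_right: "ip x (y - z) = ip x y - ip x z"
  by (simp only: diff_conv_add_uminus ip_add_right ip_minus_right)
lemma ip_diff_left: "ip (x - y) z = ip x z - ip y z"
  by (simp only: diff_conv_add_uminus ip_add_left ip_minus_left)
lemma ip_sum_right: "ip x (sum f S) = (\<Sum>s\<in>S. ip x (f s))"
  by (induction S rule: infinite_finite_induct) (auto simp: ip_add_right)
lemma sc_zero[simp]: "sc a 0 = 0"
  by (metis add_cancel_right_right sc_add_right add_0)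
lemma sc_0[simp]: "sc 0 x = 0"
  by (metis of_real_0 sc_of_real scaleR_zero_left)
lemma sc_minus: "sc a (- x) = - sc a x"
  by (metis add.inverse_unique sc_add_right sc_zero add.right_inverse)
lemma sc_uminus: "sc (- a) x = - sc a x"
  by (metis add.inverse_unique sc_add_left sc_0 add.right_inverse)
lemma sc_scaleR: "sc a (r *\<^sub>R x) = r *\<^sub>R sc a x"
  by (metis sc_mult sc_of_real mult.commute)
lemma sc_sum: "sc a (sum f S) = (\<Sum>s\<in>S. sc a (f s))"
  by (induction S rule: infinite_finite_induct) (auto simp: sc_add_right)

lemma norm_power2_ip: "(norm x)\<^sup>2 = Re (ip x x)"
  by (simp add: ip_self)
lemma ip_self_eq_0: "ip x x = 0 \<longleftrightarrow> x = 0"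
  by (simp add: ip_self)

lemma norm_sc: "norm (sc a x) = cmod a * norm x"
proof -
  have "(norm (sc a x))\<^sup>2 = Re (cnj a * a * ip x x)"
    by (simp only: norm_power2_ip ip_sc_left ip_sc_right ac_simps)
  also have "cnj a * a = complex_of_real ((cmod a)\<^sup>2)"
    by (metis complex_norm_square mult.commute)
  also have "Re (complex_of_real ((cmod a)\<^sup>2) * ip x x) = (cmod a * norm x)\<^sup>2"
    by (simp only: ip_self of_real_mult[symmetric] Re_complex_of_real power_mult_distrib)
  finally show ?thesis
    by (metis norm_ge_zero power2_eq_imp_eq zero_le_mult_iff)
qed

lemma bounded_linear_sc: "bounded_linear (sc a)"
  by (rule bounded_linear_intro[where K="cmod a"]) (auto simp: sc_add_right sc_scaleR norm_sc)

lemma norm_add_sq: "(norm (x + y))\<^sup>2 = (norm x)\<^sup>2 + (norm y)\<^sup>2 + 2 * Re (ip x y)"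
proof -
  have "ip (x+y) (x+y) = ip x x + ip y y + (ip x y + cnj (ip x y))"
    by (simp add: ip_add_left ip_add_right ip_cnj[of x y])
  then show ?thesis by (simp add: norm_power2_ip)
qed

lemma norm_diff_sq: "(norm (x - y))\<^sup>2 = (norm x)\<^sup>2 + (norm y)\<^sup>2 - 2 * Re (ip x y)"
  using norm_add_sq[of x "- y"] by (simp add: ip_minus_right)

lemma cauchy_schwarz: "cmod (ip x y) \<le> norm x * norm y"
proof (cases "ip x y = 0")
  case True then show ?thesis by simp
next
  case False
  define m where "m = cmod (ip x y)"
  have m: "m > 0" using False by (simp add: m_def)
  \<comment> \<open>rotate y so that its inner product with x becomes the positive real m\<close>
  define u where "u = ip y x / m"
  define z where "z = sc u y"
  have cu: "cmod u = 1" using m by (simp add: u_def m_def ip_cnj[of y x] norm_divide)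
  have nz: "norm z = norm y" by (simp add: z_def norm_sc cu)
  have ipz: "ip x z = complex_of_real m"
  proof -
    have "ip x z = cnj (ip x y) * ip x y / m" by (simp add: z_def ip_sc_right u_def ip_cnj[of y x])
    also have "cnj (ip x y) * ip x y = complex_of_real (m^2)"
      by (metis complex_norm_square m_def mult.commute)
    finally show ?thesis using m by (simp add: power2_eq_square)
  qed
  have yne: "norm y > 0" using False by auto
  have "\<And>r. 0 \<le> (norm x)\<^sup>2 + r^2 * (norm y)\<^sup>2 - 2 * r * m"
  proof -
    fix r :: real
    have "0 \<le> (norm (x - r *\<^sub>R z))\<^sup>2" by simp
    also have "\<dots> = (norm x)\<^sup>2 + r^2 * (norm y)\<^sup>2 - 2 * r * m"
      by (simp add: norm_diff_sq ip_scaleR_right ipz nz power_mult_distrib)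
    finally show "0 \<le> (norm x)\<^sup>2 + r^2 * (norm y)\<^sup>2 - 2 * r * m" .
  qed
  from this[of "m / (norm y)\<^sup>2"] yne
  have "0 \<le> (norm x)\<^sup>2 - m^2 / (norm y)\<^sup>2"
    by (simp add: field_simps power2_eq_square)
  then have "m^2 \<le> (norm x * norm y)^2" using yne
    by (simp add: field_simps power_mult_distrib)
  then have "m \<le> norm x * norm y" by (rule power2_le_imp_le) simp
  then show ?thesis unfolding m_def .
qed

lemma bounded_bilinear_ip: "bounded_bilinear ip"
proof
  show "\<exists>K. \<forall>a b. norm (ip a b) \<le> norm a * norm b * K"
    by (rule exI[of _ 1]) (simp add: cauchy_schwarz)
qed (simp_all add: ip_add_left ip_add_right ip_scaleR_left ip_scaleR_right)

lemmas tendsto_ip = bounded_bilinear.tendsto[OF bounded_bilinear_ip]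
lemmas continuous_on_ip = bounded_bilinear.continuous_on[OF bounded_bilinear_ip]

section \<open>Orthogonal projection and Riesz representation\<close>

definition csubspace :: "'h set \<Rightarrow> bool" where
  "csubspace M \<longleftrightarrow> 0 \<in> M \<and> (\<forall>x\<in>M. \<forall>y\<in>M. x + y \<in> M) \<and> (\<forall>a. \<forall>x\<in>M. sc a x \<in> M)"

lemma csubspace_minus: "csubspace M \<Longrightarrow> x \<in> M \<Longrightarrow> - x \<in> M"
  unfolding csubspace_def by (metis sc_one sc_uminus)
lemma csubspace_diff: "csubspace M \<Longrightarrow> x \<in> M \<Longrightarrow> y \<in> M \<Longrightarrow> x - y \<in> M"
  using csubspace_minus[of M y] unfolding csubspace_def by (metis diff_conv_add_uminus)
lemma csubspace_scaleR: "csubspace M \<Longrightarrow> x \<in> M \<Longrightarrow> r *\<^sub>R x \<in> M"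
  unfolding csubspace_def by (metis sc_of_real)

lemma parallelogram: fixes a b :: 'h shows "(norm (a - b))\<^sup>2 + (norm (a + b))\<^sup>2 = 2 * (norm a)\<^sup>2 + 2 * (norm b)\<^sup>2"
  unfolding norm_add_sq norm_diff_sq by linarith

lemma near_minimizers_close:
  assumes M: "csubspace M" and ab: "a \<in> M" "b \<in> M"
    and d: "\<And>m. m \<in> M \<Longrightarrow> d \<le> norm (x - m)" "d \<ge> 0"
    and near: "norm (x - a) \<le> d + e" "norm (x - b) \<le> d + e'" "e \<ge> 0" "e' \<ge> 0"
  shows "(norm (a - b))\<^sup>2 \<le> 4 * d * e + 2 * e\<^sup>2 + 4 * d * e' + 2 * e'\<^sup>2"
proof -
  have mid: "(1/2) *\<^sub>R (a + b) \<in> M" using M ab by (auto simp: csubspace_def intro!: csubspace_scaleR)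
  have "(x - a) + (x - b) = 2 *\<^sub>R (x - (1/2) *\<^sub>R (a + b))"
    by (simp add: algebra_simps scaleR_2)
  then have "norm ((x - a) + (x - b)) = 2 * norm (x - (1/2) *\<^sub>R (a + b))" by simp
  then have mid_far: "(norm ((x - a) + (x - b)))\<^sup>2 \<ge> 4 * d\<^sup>2"
    using d(1)[OF mid] d(2) by (simp add: power_mult_distrib power_mono)
  have "(norm (x - a))\<^sup>2 \<le> (d + e)\<^sup>2" "(norm (x - b))\<^sup>2 \<le> (d + e')\<^sup>2"
    using near by (auto intro!: power_mono)
  moreover have "(norm (a - b))\<^sup>2 = 2 * (norm (x - a))\<^sup>2 + 2 * (norm (x - b))\<^sup>2 - (norm ((x - a) + (x - b)))\<^sup>2"
    using parallelogram[of "x - a" "x - b"] by (simp add: norm_minus_commute)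
  ultimately show ?thesis using mid_far by (simp add: power2_eq_square algebra_simps)
qed

lemma minimizing_sequence_Cauchy:
  assumes M: "csubspace M" and s: "\<And>n. s n \<in> M"
    and d: "\<And>m. m \<in> M \<Longrightarrow> d \<le> norm (x - m)" "d \<ge> 0"
    and near: "\<And>n. norm (x - s n) \<le> d + 1 / (real n + 1)"
  shows "Cauchy s"
proof (rule metric_CauchyI)
  define e where "e n = 1 / (real n + 1)" for n :: nat
  have e0: "e n > 0" for n by (simp add: e_def)
  have "e \<longlonglongrightarrow> 0"
    unfolding e_def using LIMSEQ_inverse_real_of_nat by (simp add: inverse_eq_divide add.commute)
  then have bound_lim: "((\<lambda>n. 8 * d * e n + 4 * (e n)\<^sup>2) \<longlongrightarrow> 8 * d * 0 + 4 * 0\<^sup>2) sequentially"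
    by (intro tendsto_intros)
  fix r :: real assume r: "r > 0"
  with bound_lim obtain N where N: "8 * d * e N + 4 * (e N)\<^sup>2 < r\<^sup>2"
    using order_tendstoD(2)[of _ _ sequentially "r\<^sup>2"] by (force dest: eventually_happens')
  show "\<exists>N. \<forall>m\<ge>N. \<forall>n\<ge>N. dist (s m) (s n) < r"
  proof (intro exI allI impI)
    fix m n assume mn: "m \<ge> N" "n \<ge> N"
    have eN: "e m \<le> e N" "e n \<le> e N" using mn by (auto simp: e_def frac_le)
    have "(norm (s m - s n))\<^sup>2 \<le> 4 * d * e m + 2 * (e m)\<^sup>2 + 4 * d * e n + 2 * (e n)\<^sup>2"
      using near_minimizers_close[OF M s s d near near] e0 less_imp_le by (simp add: e_def)
    also have "\<dots> \<le> 8 * d * e N + 4 * (e N)\<^sup>2"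
    proof -
      have "(e m)\<^sup>2 \<le> (e N)\<^sup>2" "(e n)\<^sup>2 \<le> (e N)\<^sup>2"
        using power_mono[OF eN(1) less_imp_le[OF e0]] power_mono[OF eN(2) less_imp_le[OF e0]] by auto
      moreover have "4 * d * e m \<le> 4 * d * e N" "4 * d * e n \<le> 4 * d * e N"
        using eN d by (auto intro!: mult_left_mono)
      ultimately show ?thesis by linarith
    qed
    also have "\<dots> < r\<^sup>2" by (rule N)
    finally show "dist (s m) (s n) < r"
      using r by (simp add: dist_norm power_less_imp_less_base less_imp_le)
  qed
qed

lemma closest_point_exists:
  assumes M: "csubspace M" "closed M"
  shows "\<exists>m\<in>M. \<forall>m'\<in>M. norm (x - m) \<le> norm (x - m')"
proof -
  define d where "d = (INF m\<in>M. norm (x - m))"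
  have Mne: "M \<noteq> {}" using M by (auto simp: csubspace_def)
  have bdd: "bdd_below ((\<lambda>m. norm (x - m)) ` M)" by (rule bdd_belowI[of _ 0]) auto
  have dle: "d \<le> norm (x - m)" if "m \<in> M" for m
    unfolding d_def using bdd that by (rule cINF_lower)
  have d0: "d \<ge> 0" unfolding d_def by (rule cINF_greatest[OF Mne]) simp
  have "\<forall>n. \<exists>m\<in>M. norm (x - m) \<le> d + 1 / (real n + 1)"
  proof
    fix n :: nat
    have "(INF m\<in>M. norm (x - m)) < d + 1 / (real n + 1)" by (simp add: d_def)
    then show "\<exists>m\<in>M. norm (x - m) \<le> d + 1 / (real n + 1)"
      using cINF_less_iff[OF Mne bdd] less_imp_le by blast
  qed
  then obtain s where s: "\<And>n. s n \<in> M" "\<And>n. norm (x - s n) \<le> d + 1 / (real n + 1)"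
    by metis
  then obtain m where lim: "s \<longlonglongrightarrow> m"
    using minimizing_sequence_Cauchy[OF M(1) s(1) dle d0 s(2)] by (auto simp: Cauchy_convergent_iff convergent_def)
  have "norm (x - m) \<le> d + 0"
  proof (rule tendsto_le[OF trivial_limit_sequentially])
    show "((\<lambda>n. d + 1 / (real n + 1)) \<longlongrightarrow> d + 0) sequentially"
      using LIMSEQ_inverse_real_of_nat by (intro tendsto_add tendsto_const) (simp add: inverse_eq_divide add.commute)
    show "((\<lambda>n. norm (x - s n)) \<longlongrightarrow> norm (x - m)) sequentially" by (intro tendsto_intros lim)
  qed (use s(2) in auto)
  moreover have "m \<in> M" using M(2) s(1) lim closed_sequentially by blast
  ultimately show ?thesis using dle by force
qed

lemma closest_point_orthogonal:
  assumes M: "csubspace M" and m: "m \<in> M" and u: "u \<in> M"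
    and closest: "\<And>m'. m' \<in> M \<Longrightarrow> norm (x - m) \<le> norm (x - m')"
  shows "ip u (x - m) = 0"
proof (rule ccontr)
  define r where "r = x - m"
  define c where "c = ip u r"
  define t where "t = 1 / ((norm u)\<^sup>2 + 1)"
  assume "ip u (x - m) \<noteq> 0"
  then have c0: "cmod c > 0" by (simp add: c_def r_def)
  have t0: "t > 0" by (simp add: t_def add_nonneg_pos)
  \<comment> \<open>moving from m towards u by a small multiple of c would bring us closer to x\<close>
  have "m + sc (complex_of_real t * c) u \<in> M" using M u m by (auto simp: csubspace_def)
  from closest[OF this] have "(norm r)\<^sup>2 \<le> (norm (r - sc (complex_of_real t * c) u))\<^sup>2"
    by (simp add: r_def algebra_simps power_mono)
  also have "\<dots> = (norm r)\<^sup>2 + (t * cmod c)\<^sup>2 * (norm u)\<^sup>2 - 2 * Re (complex_of_real t * c * ip r u)"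
    by (simp add: norm_diff_sq norm_sc ip_sc_right power_mult_distrib norm_mult)
  also have "ip r u = cnj c" by (simp add: c_def ip_cnj[of u r])
  also have "Re (complex_of_real t * c * cnj c) = t * (cmod c)\<^sup>2"
    by (simp only: mult.assoc complex_norm_square[symmetric] of_real_mult[symmetric] Re_complex_of_real)
  finally have "0 \<le> (t * cmod c)\<^sup>2 * (norm u)\<^sup>2 - 2 * (t * (cmod c)\<^sup>2)" by linarith
  also have "\<dots> = t * (cmod c)\<^sup>2 * (t * (norm u)\<^sup>2 - 2)"
    by (simp add: power2_eq_square algebra_simps)
  finally have "0 \<le> t * (cmod c)\<^sup>2 * (t * (norm u)\<^sup>2 - 2)" .
  moreover have "t * (norm u)\<^sup>2 \<le> 1" by (simp add: t_def pos_divide_le_eq add_nonneg_pos)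
  moreover have "t * (cmod c)\<^sup>2 > 0" using t0 c0 by simp
  ultimately show False using mult_pos_neg[of "t * (cmod c)\<^sup>2" "t * (norm u)\<^sup>2 - 2"] by linarith
qed

lemma orthogonal_projection_exists:
  assumes "csubspace M" "closed M"
  shows "\<exists>m\<in>M. \<forall>u\<in>M. ip u (x - m) = 0"
  using closest_point_exists[OF assms, of x] closest_point_orthogonal[OF assms(1)] by blast

lemma riesz_representation:
  assumes g: "\<And>x y. g (x + y) = g x + g y" "\<And>a x. g (sc a x) = a * g x"
    "\<And>x. cmod (g x) \<le> C * norm x"
  shows "\<exists>w. \<forall>x. g x = ip w x"
proof -
  have bl: "bounded_linear g"
  proof (rule bounded_linear_intro[where K=C])
    show "g (r *\<^sub>R x) = r *\<^sub>R g x" for r x using g(2)[of "complex_of_real r" x]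
      by (simp add: sc_of_real scaleR_conv_of_real)
  qed (use g in \<open>auto simp: mult.commute\<close>)
  interpret g: bounded_linear g by (rule bl)
  show ?thesis
  proof (cases "\<forall>x. g x = 0")
    case True then show ?thesis by (intro exI[of _ 0]) simp
  next
    case False
    then obtain x0 where x0: "g x0 \<noteq> 0" by auto
    define N where "N = {x. g x = 0}"
    have csN: "csubspace N" by (auto simp: csubspace_def N_def g)
    have clN: "closed N" unfolding N_def
      by (intro closed_Collect_eq g.continuous_on continuous_on_id continuous_on_const)
    obtain m where m: "m \<in> N" "\<And>u. u \<in> N \<Longrightarrow> ip u (x0 - m) = 0"
      using orthogonal_projection_exists[OF csN clN, of x0] by auto
    define v where "v = x0 - m"
    have gv: "g v \<noteq> 0" using m(1) x0 by (simp add: v_def N_def g.diff)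
    have vne: "v \<noteq> 0" using gv by auto
    have nv: "(norm v)\<^sup>2 > 0" using vne by simp
    show ?thesis
    proof (intro exI allI)
      fix x
      define y where "y = x - sc (g x / g v) v"
      have "g y = 0" using gv by (simp add: y_def g.diff g(2))
      then have "ip y v = 0" using m(2) by (simp add: N_def v_def)
      then have "ip x v = cnj (g x / g v) * complex_of_real ((norm v)\<^sup>2)"
        by (simp add: y_def ip_diff_left ip_sc_left ip_self)
      then have "ip v x = (g x / g v) * complex_of_real ((norm v)\<^sup>2)" by (simp add: ip_cnj[of v x])
      then have "g x = (g v / complex_of_real ((norm v)\<^sup>2)) * ip v x" using gv nv
        by (simp add: field_simps)
      then show "g x = ip (sc (cnj (g v / complex_of_real ((norm v)\<^sup>2))) v) x"
        by (simp add: ip_sc_left)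
    qed
  qed
qed

lemma uniformly_continuous_on_bounded_additive:
  fixes f :: "'h \<Rightarrow> 'v::real_normed_vector"
  assumes D: "csubspace D"
    and add: "\<And>x y. x \<in> D \<Longrightarrow> y \<in> D \<Longrightarrow> f (x + y) = f x + f y"
    and bnd: "\<And>x. x \<in> D \<Longrightarrow> norm (f x) \<le> C * norm x"
  shows "uniformly_continuous_on D f"
  unfolding uniformly_continuous_on_def
proof (intro allI impI)
  have f0: "f 0 = 0" using add[of 0 0] D by (simp add: csubspace_def)
  have fd: "f (x - y) = f x - f y" if "x \<in> D" "y \<in> D" for x y
    using add[of "x - y" y] that csubspace_diff[OF D] by simp
  fix e :: real assume e: "e > 0"
  show "\<exists>d>0. \<forall>x\<in>D. \<forall>x'\<in>D. dist x' x < d \<longrightarrow> dist (f x') (f x) < e"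
  proof (intro exI[of _ "e / (\<bar>C\<bar> + 1)"] conjI ballI impI)
    show "e / (\<bar>C\<bar> + 1) > 0" using e by (simp add: add_nonneg_pos)
    fix x x' assume xx: "x \<in> D" "x' \<in> D" "dist x' x < e / (\<bar>C\<bar> + 1)"
    have "dist (f x') (f x) = norm (f (x' - x))" using xx by (simp add: dist_norm fd)
    also have "\<dots> \<le> C * norm (x' - x)" using bnd csubspace_diff[OF D xx(2,1)] by simp
    also have "\<dots> \<le> (\<bar>C\<bar> + 1) * norm (x' - x)" by (intro mult_right_mono) auto
    also have "\<dots> < (\<bar>C\<bar> + 1) * (e / (\<bar>C\<bar> + 1))"
      using xx(3) by (intro mult_strict_left_mono) (auto simp: dist_norm add_nonneg_pos)
    also have "\<dots> = e" by (simp add: add_nonneg_pos)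
    finally show "dist (f x') (f x) < e" .
  qed
qed

lemma extension_by_continuity:
  fixes f :: "'h \<Rightarrow> 'v::banach" and scV :: "complex \<Rightarrow> 'v \<Rightarrow> 'v"
  assumes D: "csubspace D" "closure D = UNIV"
    and add: "\<And>x y. x \<in> D \<Longrightarrow> y \<in> D \<Longrightarrow> f (x + y) = f x + f y"
    and hom: "\<And>a x. x \<in> D \<Longrightarrow> f (sc a x) = scV a (f x)"
    and bnd: "\<And>x. x \<in> D \<Longrightarrow> norm (f x) \<le> C * norm x"
    and scVc: "\<And>a. continuous_on UNIV (scV a)"
  shows "\<exists>g. (\<forall>x\<in>D. g x = f x) \<and> (\<forall>x y. g (x + y) = g x + g y) \<and> (\<forall>a x. g (sc a x) = scV a (g x))
           \<and> (\<forall>x. norm (g x) \<le> C * norm x)"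
proof -
  obtain g where g: "uniformly_continuous_on (closure D) g" "\<And>x. x \<in> D \<Longrightarrow> f x = g x"
    using uniformly_continuous_on_extension_on_closure
      [OF uniformly_continuous_on_bounded_additive[OF D(1) add bnd]] by metis
  have gc: "continuous_on UNIV g" using g(1) D(2) uniformly_continuous_imp_continuous by force
  have gadd_D: "g (x + y) = g x + g y" if "y \<in> D" for x y
  proof (rule eq_on_dense[OF D(2), where f="\<lambda>x. g (x + y)" and g="\<lambda>x. g x + g y"])
    show "continuous_on UNIV (\<lambda>x. g (x + y))"
      by (rule continuous_on_compose2[OF gc]) (auto intro!: continuous_intros)
    show "continuous_on UNIV (\<lambda>x. g x + g y)" by (intro continuous_intros gc)
    show "g (x + y) = g x + g y" if "x \<in> D" for x
      using that \<open>y \<in> D\<close> D(1) g(2)[symmetric] add by (simp add: csubspace_def)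
  qed
  have gadd: "g (x + y) = g x + g y" for x y
  proof (rule eq_on_dense[OF D(2), where f="\<lambda>y. g (x + y)" and g="\<lambda>y. g x + g y"])
    show "continuous_on UNIV (\<lambda>y. g (x + y))"
      by (rule continuous_on_compose2[OF gc]) (auto intro!: continuous_intros)
    show "continuous_on UNIV (\<lambda>y. g x + g y)" by (intro continuous_intros gc)
  qed (rule gadd_D)
  have ghom: "g (sc a x) = scV a (g x)" for a x
  proof (rule eq_on_dense[OF D(2), where f="\<lambda>x. g (sc a x)" and g="\<lambda>x. scV a (g x)"])
    show "continuous_on UNIV (\<lambda>x. g (sc a x))"
      by (rule continuous_on_compose2[OF gc]) (auto intro!: linear_continuous_on bounded_linear_sc)
    show "continuous_on UNIV (\<lambda>x. scV a (g x))"
      by (rule continuous_on_compose2[OF scVc gc]) auto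
    show "g (sc a x) = scV a (g x)" if "x \<in> D" for x
      using that D(1) g(2)[symmetric] hom by (simp add: csubspace_def)
  qed
  have gb: "norm (g x) \<le> C * norm x" for x
  proof -
    have "norm (g x) - C * norm x \<le> 0"
      by (rule continuous_le_on_closure[where S=D])
        (use D(2) gc bnd g(2) in \<open>auto intro!: continuous_intros\<close>)
    then show ?thesis by simp
  qed
  show ?thesis using g(2) gadd ghom gb by metis
qed

section \<open>Sesquilinear forms and the commutator\<close>

lemma bounded_op_imp_bounded_linear:
  assumes "bounded_op sc T" shows "bounded_linear T"
proof -
  from assms obtain C where add: "\<And>x y. T (x + y) = T x + T y"
    and hom: "\<And>a x. T (sc a x) = sc a (T x)" and b: "\<And>x. norm (T x) \<le> C * norm x"
    unfolding bounded_op_def by blast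
  show ?thesis
  proof (rule bounded_linear_intro[where K=C])
    show "T (r *\<^sub>R x) = r *\<^sub>R T x" for r x using hom[of "of_real r" x] by (simp add: sc_of_real)
  qed (use add b in \<open>auto simp: mult.commute\<close>)
qed

lemma bounded_op_continuous: "bounded_op sc T \<Longrightarrow> continuous_on UNIV T"
  by (intro linear_continuous_on bounded_op_imp_bounded_linear)

lemma bounded_opD:
  assumes "bounded_op sc T"
  shows "T (x + y) = T x + T y" "T (sc a x) = sc a (T x)"
  using assms unfolding bounded_op_def by blast+

lemma bounded_op_diff: "bounded_op sc T \<Longrightarrow> T (a - b) = T a - T b"
  by (metis bounded_opD(1) diff_add_cancel add_diff_cancel)

lemma self_adjointD:
  assumes "self_adjoint sc ip DA A"
  shows "csubspace DA" "closure DA = UNIV"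
    "\<And>x y. x \<in> DA \<Longrightarrow> y \<in> DA \<Longrightarrow> A (x + y) = A x + A y"
    "\<And>a x. x \<in> DA \<Longrightarrow> A (sc a x) = sc a (A x)"
    "\<And>y. y \<in> DA \<longleftrightarrow> (\<exists>z. \<forall>x\<in>DA. ip (A x) y = ip x z)"
    "\<And>x y. x \<in> DA \<Longrightarrow> y \<in> DA \<Longrightarrow> ip (A x) y = ip x (A y)"
  using assms unfolding self_adjoint_def csubspace_def by blast+

definition sesquilinear_on :: "'h set \<Rightarrow> ('h \<Rightarrow> 'h \<Rightarrow> complex) \<Rightarrow> bool" where
  "sesquilinear_on D p \<longleftrightarrow> (\<forall>x\<in>D. \<forall>y\<in>D. \<forall>z\<in>D. p (x + y) z = p x z + p y z \<and> p x (y + z) = p x y + p x z)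
     \<and> (\<forall>t. \<forall>x\<in>D. \<forall>y\<in>D. p (sc t x) y = cnj t * p x y \<and> p x (sc t y) = t * p x y)"

lemma sesquilinear_on_add_left: "sesquilinear_on D p \<Longrightarrow> x \<in> D \<Longrightarrow> y \<in> D \<Longrightarrow> z \<in> D \<Longrightarrow> p (x + y) z = p x z + p y z"
  unfolding sesquilinear_on_def by blast
lemma sesquilinear_on_add_right: "sesquilinear_on D p \<Longrightarrow> x \<in> D \<Longrightarrow> y \<in> D \<Longrightarrow> z \<in> D \<Longrightarrow> p x (y + z) = p x y + p x z"
  unfolding sesquilinear_on_def by blast
lemma sesquilinear_on_sc_left: "sesquilinear_on D p \<Longrightarrow> x \<in> D \<Longrightarrow> y \<in> D \<Longrightarrow> p (sc t x) y = cnj t * p x y"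
  unfolding sesquilinear_on_def by blast
lemma sesquilinear_on_sc_right: "sesquilinear_on D p \<Longrightarrow> x \<in> D \<Longrightarrow> y \<in> D \<Longrightarrow> p x (sc t y) = t * p x y"
  unfolding sesquilinear_on_def by blast

lemma sesquilinear_on_expand:
  assumes p: "sesquilinear_on D p" and D: "csubspace D" and ab: "a \<in> D" "b \<in> D"
  shows "p (a + sc t b) (a + sc t b) = p a a + t * p a b + cnj t * p b a + cnj t * t * p b b"
proof -
  have tb: "sc t b \<in> D" using D ab by (simp add: csubspace_def)
  have ab2: "a + sc t b \<in> D" using D ab tb by (simp add: csubspace_def)
  have "p (a + sc t b) (a + sc t b) = p a (a + sc t b) + p (sc t b) (a + sc t b)"
    by (rule sesquilinear_on_add_left[OF p ab(1) tb ab2])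
  also have "p a (a + sc t b) = p a a + t * p a b"
    using sesquilinear_on_add_right[OF p ab(1) ab(1) tb] sesquilinear_on_sc_right[OF p ab(1) ab(2)] by simp
  also have "p (sc t b) (a + sc t b) = cnj t * p b (a + sc t b)" by (rule sesquilinear_on_sc_left[OF p ab(2) ab2])
  also have "p b (a + sc t b) = p b a + t * p b b"
    using sesquilinear_on_add_right[OF p ab(2) ab(1) tb] sesquilinear_on_sc_right[OF p ab(2) ab(2)] by simp
  finally show ?thesis by (simp add: algebra_simps)
qed

lemma polarization_identity:
  assumes p: "sesquilinear_on D p" and D: "csubspace D" and ab: "a \<in> D" "b \<in> D"
  shows "4 * p a b = p (a + sc 1 b) (a + sc 1 b) - p (a + sc (-1) b) (a + sc (-1) b)
     - \<i> * p (a + sc \<i> b) (a + sc \<i> b) + \<i> * p (a + sc (-\<i>) b) (a + sc (-\<i>) b)"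
  unfolding sesquilinear_on_expand[OF assms, of 1] sesquilinear_on_expand[OF assms, of "-1"]
    sesquilinear_on_expand[OF assms, of "\<i>"] sesquilinear_on_expand[OF assms, of "-\<i>"]
  by (simp add: algebra_simps)

lemma sesquilinear_on_zero_if_diag_zero:
  assumes p: "sesquilinear_on D p" and D: "csubspace D" and z: "\<And>a. a \<in> D \<Longrightarrow> p a a = 0" and ab: "a \<in> D" "b \<in> D"
  shows "p a b = 0"
proof -
  have T: "a + sc t b \<in> D" for t using D ab by (simp add: csubspace_def)
  have "4 * p a b = 0" unfolding polarization_identity[OF p D ab]
    using z[OF T[of 1]] z[OF T[of "-1"]] z[OF T[of "\<i>"]] z[OF T[of "-\<i>"]] by simp
  then show ?thesis by simp
qed

lemma sesquilinear_on_zero_left: assumes "sesquilinear_on D p" "csubspace D" "b \<in> D" shows "p 0 b = 0"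
proof -
  have "p (0 + 0) b = p 0 b + p 0 b" using assms by (intro sesquilinear_on_add_left) (auto simp: csubspace_def)
  then show ?thesis by simp
qed

lemma sesquilinear_on_zero_right: assumes "sesquilinear_on D p" "csubspace D" "a \<in> D" shows "p a 0 = 0"
proof -
  have "p a (0 + 0) = p a 0 + p a 0" using assms by (intro sesquilinear_on_add_right) (auto simp: csubspace_def)
  then show ?thesis by simp
qed

lemma sesquilinear_on_bound_by_diag_unit:
  assumes p: "sesquilinear_on D p" and D: "csubspace D" and c: "c \<ge> 0"
    and bd: "\<And>a. a \<in> D \<Longrightarrow> cmod (p a a) \<le> c * (norm a)\<^sup>2"
    and ab: "a \<in> D" "b \<in> D" "norm a \<le> 1" "norm b \<le> 1"
  shows "cmod (p a b) \<le> 4 * c"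
proof -
  have each: "cmod (p (a + sc t b) (a + sc t b)) \<le> 4 * c" if t: "cmod t = 1" for t
  proof -
    have "a + sc t b \<in> D" using D ab by (simp add: csubspace_def)
    then have "cmod (p (a + sc t b) (a + sc t b)) \<le> c * (norm (a + sc t b))\<^sup>2" by (rule bd)
    also have "norm (a + sc t b) \<le> 2"
      using norm_triangle_ineq[of a "sc t b"] ab by (simp add: norm_sc t)
    then have "c * (norm (a + sc t b))\<^sup>2 \<le> c * 2\<^sup>2"
      using c by (intro mult_left_mono power_mono) auto
    finally show ?thesis by simp
  qed
  have "cmod (4 * p a b) \<le> cmod (p (a + sc 1 b) (a + sc 1 b)) + cmod (p (a + sc (-1) b) (a + sc (-1) b))
     + cmod (p (a + sc \<i> b) (a + sc \<i> b)) + cmod (p (a + sc (-\<i>) b) (a + sc (-\<i>) b))"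
    unfolding polarization_identity[OF p D ab(1,2)]
    by (rule order_trans[OF norm_triangle_ineq] add_mono order_trans[OF norm_triangle_ineq4]
        order_trans[OF norm_triangle_ineq4] | simp add: norm_mult)+
  also have "\<dots> \<le> 4 * c + 4 * c + 4 * c + 4 * c"
    by (intro add_mono each) auto
  finally show ?thesis by (simp add: norm_mult)
qed

lemma sesquilinear_on_bound_by_diag:
  assumes p: "sesquilinear_on D p" and D: "csubspace D" and c: "c \<ge> 0"
    and bd: "\<And>a. a \<in> D \<Longrightarrow> cmod (p a a) \<le> c * (norm a)\<^sup>2" and ab: "a \<in> D" "b \<in> D"
  shows "cmod (p a b) \<le> 4 * c * norm a * norm b"
proof -
  show ?thesis
  proof (cases "a = 0 \<or> b = 0")
    case True then show ?thesis using sesquilinear_on_zero_left[OF p D] sesquilinear_on_zero_right[OF p D] ab by auto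
  next
    case False
    then have na: "norm a > 0" and nb: "norm b > 0" by auto
    define a' where "a' = sc (of_real (1 / norm a)) a"
    define b' where "b' = sc (of_real (1 / norm b)) b"
    have a'D: "a' \<in> D" and b'D: "b' \<in> D" using D ab by (auto simp: csubspace_def a'_def b'_def)
    have na': "norm a' = 1" using na by (simp add: a'_def norm_sc norm_divide)
    have nb': "norm b' = 1" using nb by (simp add: b'_def norm_sc norm_divide)
    have aa: "a = sc (of_real (norm a)) a'" using na by (simp add: a'_def sc_mult flip: of_real_mult)
    have bb: "b = sc (of_real (norm b)) b'" using nb by (simp add: b'_def sc_mult flip: of_real_mult)
    have "p a b = of_real (norm a) * of_real (norm b) * p a' b'"
      by (subst aa, subst bb) (use p a'D b'D D in \<open>simp add: sesquilinear_on_def csubspace_def\<close>)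
    then have "cmod (p a b) = norm a * norm b * cmod (p a' b')" by (simp add: norm_mult)
    also have "\<dots> \<le> norm a * norm b * (4 * c)"
      using sesquilinear_on_bound_by_diag_unit[OF p D c bd a'D b'D] na' nb' by (intro mult_left_mono) auto
    finally show ?thesis by (simp add: algebra_simps)
  qed
qed

lemma eq_if_ip_eq_on_dense:
  assumes "closure D = UNIV" "\<And>a. a \<in> D \<Longrightarrow> ip a w1 = ip a w2" shows "w1 = w2"
proof -
  have "ip a (w1 - w2) = 0" for a
  proof (rule eq_on_dense[OF assms(1), where f="\<lambda>a. ip a (w1 - w2)" and g="\<lambda>a. 0"])
    show "continuous_on UNIV (\<lambda>a. ip a (w1 - w2))" by (intro continuous_on_ip continuous_intros)
    show "ip a (w1 - w2) = 0" if "a \<in> D" for a using assms(2)[OF that] by (simp add: ip_diff_right)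
  qed simp
  from this[of "w1 - w2"] show ?thesis by (simp add: ip_self_eq_0)
qed

lemma bounded_sesquilinear_vector_representation:
  assumes DA: "csubspace DA" "closure DA = UNIV" and q: "sesquilinear_on DA q" and K: "K \<ge> 0"
    and qb: "\<And>a b. a \<in> DA \<Longrightarrow> b \<in> DA \<Longrightarrow> cmod (q a b) \<le> K * norm a * norm b"
    and b: "b \<in> DA"
  shows "\<exists>w. (\<forall>a\<in>DA. q a b = ip a w) \<and> norm w \<le> K * norm b"
proof -
  have "\<exists>g. (\<forall>x\<in>DA. g x = cnj (q x b)) \<and> (\<forall>x y. g (x + y) = g x + g y) \<and> (\<forall>a x. g (sc a x) = a * g x)
         \<and> (\<forall>x. norm (g x) \<le> (K * norm b) * norm x)"
  proof (rule extension_by_continuity[OF DA])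
    show "cnj (q (x + y) b) = cnj (q x b) + cnj (q y b)" if "x \<in> DA" "y \<in> DA" for x y
      using q that b by (simp add: sesquilinear_on_def)
    show "cnj (q (sc a x) b) = a * cnj (q x b)" if "x \<in> DA" for a x
      using q that b by (simp add: sesquilinear_on_def)
    show "norm (cnj (q x b)) \<le> K * norm b * norm x" if "x \<in> DA" for x
      using qb[OF that b] by (simp add: algebra_simps)
  qed (intro continuous_intros)
  then obtain g where g: "\<And>x. x \<in> DA \<Longrightarrow> g x = cnj (q x b)" "\<And>x y. g (x + y) = g x + g y"
    "\<And>a x. g (sc a x) = a * g x" "\<And>x. norm (g x) \<le> (K * norm b) * norm x" by blast
  obtain w where w: "\<And>x. g x = ip w x" using riesz_representation[OF g(2,3,4)] by blast
  have "q a b = ip a w" if "a \<in> DA" for a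
    using g(1)[OF that] by (simp add: w ip_cnj[of w a])
  moreover have "norm w \<le> K * norm b"
  proof -
    have "(norm w)\<^sup>2 = Re (g w)" by (simp add: w norm_power2_ip)
    also have "\<dots> \<le> cmod (g w)" by (rule complex_Re_le_cmod)
    also have "\<dots> \<le> K * norm b * norm w" using g(4) by simp
    finally have "norm w * norm w \<le> (K * norm b) * norm w" by (simp add: power2_eq_square)
    then show ?thesis
      by (cases "norm w = 0") (use K in \<open>auto simp: mult_le_cancel_right\<close>)
  qed
  ultimately show ?thesis by blast
qed

lemma bounded_sesquilinear_representation:
  assumes DA: "csubspace DA" "closure DA = UNIV" and q: "sesquilinear_on DA q" and K: "K \<ge> 0"
    and qb: "\<And>a b. a \<in> DA \<Longrightarrow> b \<in> DA \<Longrightarrow> cmod (q a b) \<le> K * norm a * norm b"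
  shows "\<exists>B. bounded_op sc B \<and> (\<forall>a\<in>DA. \<forall>b\<in>DA. ip a (B b) = q a b)"
proof -
  define W where "W b = (SOME w. (\<forall>a\<in>DA. q a b = ip a w) \<and> norm w \<le> K * norm b)" for b
  have W: "(\<forall>a\<in>DA. q a b = ip a (W b)) \<and> norm (W b) \<le> K * norm b" if "b \<in> DA" for b
    unfolding W_def by (rule someI_ex[OF bounded_sesquilinear_vector_representation[OF assms that]])
  have Wadd: "W (x + y) = W x + W y" if "x \<in> DA" "y \<in> DA" for x y
  proof (rule eq_if_ip_eq_on_dense[OF DA(2)])
    fix a assume a: "a \<in> DA"
    have "x + y \<in> DA" using that DA(1) by (simp add: csubspace_def)
    then have "ip a (W (x + y)) = q a (x + y)" using W a by simp
    also have "\<dots> = q a x + q a y" using q a that by (simp add: sesquilinear_on_def)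
    also have "\<dots> = ip a (W x + W y)" using W that a by (simp add: ip_add_right)
    finally show "ip a (W (x + y)) = ip a (W x + W y)" .
  qed
  have Wsc: "W (sc t x) = sc t (W x)" if "x \<in> DA" for t x
  proof (rule eq_if_ip_eq_on_dense[OF DA(2)])
    fix a assume a: "a \<in> DA"
    have "sc t x \<in> DA" using that DA(1) by (simp add: csubspace_def)
    then have "ip a (W (sc t x)) = q a (sc t x)" using W a by simp
    also have "\<dots> = t * q a x" using q a that by (simp add: sesquilinear_on_def)
    also have "\<dots> = ip a (sc t (W x))" using W that a by (simp add: ip_sc_right)
    finally show "ip a (W (sc t x)) = ip a (sc t (W x))" .
  qed
  have "\<exists>B. (\<forall>x\<in>DA. B x = W x) \<and> (\<forall>x y. B (x + y) = B x + B y) \<and> (\<forall>a x. B (sc a x) = sc a (B x))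
         \<and> (\<forall>x. norm (B x) \<le> K * norm x)"
    by (rule extension_by_continuity[OF DA])
      (use Wadd Wsc W in \<open>auto intro: linear_continuous_on bounded_linear_sc\<close>)
  then obtain B where B: "\<And>x. x \<in> DA \<Longrightarrow> B x = W x" "\<And>x y. B (x + y) = B x + B y"
      "\<And>a x. B (sc a x) = sc a (B x)" "\<And>x. norm (B x) \<le> K * norm x"
    by blast
  then have "bounded_op sc B" unfolding bounded_op_def by blast
  then show ?thesis using W B(1) by auto
qed

lemma bounded_op_eq_if_diagonal_eq:
  assumes DA: "csubspace DA" "closure DA = UNIV" and B: "bounded_op sc B1" "bounded_op sc B2"
    and diag: "\<And>a. a \<in> DA \<Longrightarrow> ip a (B1 a) = ip a (B2 a)"
  shows "B1 = B2"
proof -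
  define p where "p a b = ip a (B1 b) - ip a (B2 b)" for a b
  have p: "sesquilinear_on DA p"
    using B unfolding sesquilinear_on_def p_def
    by (auto simp: bounded_opD ip_add_left ip_add_right ip_sc_left ip_sc_right algebra_simps)
  have "p a b = 0" if "a \<in> DA" "b \<in> DA" for a b
    using sesquilinear_on_zero_if_diag_zero[OF p DA(1) _ that] diag by (simp add: p_def)
  then have on_DA: "B1 b = B2 b" if "b \<in> DA" for b
    using that by (intro eq_if_ip_eq_on_dense[OF DA(2)]) (simp add: p_def)
  have "B1 x = B2 x" for x
    by (rule eq_on_dense[OF DA(2), of B1 B2]) (use B on_DA in \<open>auto intro: bounded_op_continuous\<close>)
  then show ?thesis by auto
qed

lemma commutator_characterization:
  assumes SA: "self_adjoint sc ip DA A" and S: "in_C1 sc ip DA A S"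
  shows "bounded_op sc (commutator sc ip DA A S)"
    and "\<And>a b. a \<in> DA \<Longrightarrow> b \<in> DA \<Longrightarrow>
           ip a (commutator sc ip DA A S b) = ip (A a) (S b) - ip a (S (A b))"
proof -
  define q where "q = (\<lambda>a b. ip (A a) (S b) - ip a (S (A b)))"
  note DA = self_adjointD[OF SA]
  from S obtain c where Sb: "bounded_op sc S"
    and "\<And>a. a \<in> DA \<Longrightarrow> cmod (ip (A a) (S a) - ip a (S (A a))) \<le> c * (norm a)\<^sup>2"
    unfolding in_C1_def by blast
  then have cb: "cmod (q a a) \<le> c * (norm a)\<^sup>2" if "a \<in> DA" for a
    using that by (simp add: q_def)
  have q: "sesquilinear_on DA q"
    unfolding sesquilinear_on_def q_def using DA(1)
    by (auto simp: DA(3,4) bounded_opD[OF Sb] ip_add_left ip_add_right ip_sc_left ip_sc_right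
        ip_diff_left ip_diff_right csubspace_def algebra_simps)
  have cb': "cmod (q a a) \<le> \<bar>c\<bar> * (norm a)\<^sup>2" if "a \<in> DA" for a
    using cb[OF that] mult_right_mono[OF abs_ge_self[of c] zero_le_power2[of "norm a"]] by linarith
  have "cmod (q a b) \<le> (4 * \<bar>c\<bar>) * norm a * norm b" if "a \<in> DA" "b \<in> DA" for a b
    using sesquilinear_on_bound_by_diag[OF q DA(1) abs_ge_zero cb' that] by simp
  then obtain B where B: "bounded_op sc B" "\<And>a b. a \<in> DA \<Longrightarrow> b \<in> DA \<Longrightarrow> ip a (B b) = q a b"
    using bounded_sesquilinear_representation[OF DA(1,2) q, of "4 * \<bar>c\<bar>"] by auto
  have "commutator sc ip DA A S = B"
    unfolding commutator_def
  proof (rule the_equality)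
    show "bounded_op sc B \<and> (\<forall>a\<in>DA. ip a (B a) = ip (A a) (S a) - ip a (S (A a)))"
      using B by (simp add: q_def)
    show "B' = B" if "bounded_op sc B' \<and> (\<forall>a\<in>DA. ip a (B' a) = ip (A a) (S a) - ip a (S (A a)))" for B'
      using that B by (intro bounded_op_eq_if_diagonal_eq[OF DA(1,2)]) (auto simp: q_def)
  qed
  then show "bounded_op sc (commutator sc ip DA A S)"
    "\<And>a b. a \<in> DA \<Longrightarrow> b \<in> DA \<Longrightarrow> ip a (commutator sc ip DA A S b) = ip (A a) (S b) - ip a (S (A b))"
    using B by (simp_all add: q_def)
qed

lemma bounded_linear_sc_left: "bounded_linear (\<lambda>a. sc a e)"
proof (rule bounded_linear_intro[where K="norm e"])
  show "sc (a + b) e = sc a e + sc b e" for a b by (rule sc_add_left)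
  show "sc (r *\<^sub>R a) e = r *\<^sub>R sc a e" for r a
    by (simp add: scaleR_conv_of_real sc_mult[symmetric] sc_of_real)
  show "norm (sc a e) \<le> norm a * norm e" for a by (simp add: norm_sc)
qed

lemma tendsto_sc_left: "(f \<longlongrightarrow> a) F \<Longrightarrow> ((\<lambda>j. sc (f j) e) \<longlongrightarrow> sc a e) F"
  by (rule bounded_linear.tendsto[OF bounded_linear_sc_left])

lemma csubspace_cspan:
  assumes "finite B" shows "csubspace (cspan sc B)"
  unfolding csubspace_def cspan_def
proof (intro conjI ballI allI)
  show "0 \<in> {y. \<exists>f. y = (\<Sum>b\<in>B. sc (f b) b)}" by (intro CollectI exI[of _ "\<lambda>_. 0"]) simp
next
  fix x y assume "x \<in> {y. \<exists>f. y = (\<Sum>b\<in>B. sc (f b) b)}" "y \<in> {y. \<exists>f. y = (\<Sum>b\<in>B. sc (f b) b)}"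
  then obtain f g where "x = (\<Sum>b\<in>B. sc (f b) b)" "y = (\<Sum>b\<in>B. sc (g b) b)" by auto
  then have "x + y = (\<Sum>b\<in>B. sc (f b + g b) b)" by (simp add: sc_add_left sum.distrib)
  then show "x + y \<in> {y. \<exists>f. y = (\<Sum>b\<in>B. sc (f b) b)}" by (intro CollectI exI[of _ "\<lambda>b. f b + g b"])
next
  fix a x assume "x \<in> {y. \<exists>f. y = (\<Sum>b\<in>B. sc (f b) b)}"
  then obtain f where "x = (\<Sum>b\<in>B. sc (f b) b)" by auto
  then have "sc a x = (\<Sum>b\<in>B. sc (a * f b) b)" by (simp add: sc_sum sc_mult)
  then show "sc a x \<in> {y. \<exists>f. y = (\<Sum>b\<in>B. sc (f b) b)}" by (intro CollectI exI[of _ "\<lambda>b. a * f b"])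
qed

lemma csubspace_sum: "csubspace M \<Longrightarrow> (\<And>s. s \<in> S \<Longrightarrow> f s \<in> M) \<Longrightarrow> sum f S \<in> M"
  by (induction S rule: infinite_finite_induct) (auto simp: csubspace_def)

lemma cspan_superset: assumes "finite B" shows "B \<subseteq> cspan sc B"
proof
  fix b assume b: "b \<in> B"
  have "b = (\<Sum>c\<in>B. sc (if c = b then 1 else 0) c)"
    using assms b by (simp add: if_distrib[of "\<lambda>t. sc t _"] cong: if_cong)
  then show "b \<in> cspan sc B" unfolding cspan_def by (intro CollectI exI[of _ "\<lambda>c. if c = b then 1 else 0"])
qed

lemma cspan_minimal: assumes "csubspace M" "B \<subseteq> M" shows "cspan sc B \<subseteq> M"
proof
  fix y assume "y \<in> cspan sc B"
  then obtain f where "y = (\<Sum>b\<in>B. sc (f b) b)" by (auto simp: cspan_def)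
  then show "y \<in> M" using assms by (auto intro!: csubspace_sum simp: csubspace_def)
qed

definition orthonormal :: "'h set \<Rightarrow> bool" where
  "orthonormal E \<longleftrightarrow> (\<forall>e\<in>E. \<forall>e'\<in>E. ip e e' = (if e = e' then 1 else 0))"

lemma orthonormal_sum_coeff:
  assumes "finite E" "orthonormal E" "e0 \<in> E"
  shows "ip e0 (\<Sum>e\<in>E. sc (c e) e) = c e0"
proof -
  have "ip e0 (\<Sum>e\<in>E. sc (c e) e) = (\<Sum>e\<in>E. c e * ip e0 e)" by (simp add: ip_sum_right ip_sc_right)
  also have "\<dots> = (\<Sum>e\<in>E. if e = e0 then c e else 0)"
    using assms(2,3) by (intro sum.cong) (auto simp: orthonormal_def)
  finally show ?thesis using assms(1,3) by simp
qed

lemma orthonormal_expansion: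
  assumes "finite E" "orthonormal E" and "u \<in> cspan sc E"
  shows "u = (\<Sum>e\<in>E. sc (ip e u) e)"
proof -
  obtain c where c: "u = (\<Sum>e\<in>E. sc (c e) e)" using assms(3) by (auto simp: cspan_def)
  then show ?thesis using orthonormal_sum_coeff[OF assms(1,2)] by (simp cong: sum.cong)
qed

lemma orthonormal_insert:
  assumes "orthonormal E" "norm e = 1" "\<And>e'. e' \<in> E \<Longrightarrow> ip e' e = 0"
  shows "orthonormal (insert e E)"
proof -
  have "e \<notin> E" using assms(2) assms(3)[of e] by (auto simp: ip_self)
  moreover have "ip e e' = 0" if "e' \<in> E" for e' using assms(3)[OF that] ip_cnj[of e e'] by simp
  ultimately show ?thesis using assms(1,2,3) by (auto simp: orthonormal_def ip_self)
qed

lemma orthonormal_extend: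
  assumes E: "finite E" "orthonormal E"
  shows "\<exists>E'. finite E' \<and> orthonormal E' \<and> E \<subseteq> E' \<and> E' \<subseteq> cspan sc (insert b E) \<and> b \<in> cspan sc E'"
proof -
  have fbE: "finite (insert b E)" using E(1) by simp
  define p where "p = (\<Sum>e\<in>E. sc (ip e b) e)"
  define w where "w = b - p"
  have p_span: "p \<in> cspan sc E'" if "finite E'" "E \<subseteq> E'" for E'
    unfolding p_def using csubspace_cspan[OF that(1)] cspan_superset[OF that(1)] that(2)
    by (intro csubspace_sum) (auto simp: csubspace_def)
  have w_span: "w \<in> cspan sc (insert b E)"
    unfolding w_def using p_span[OF fbE] csubspace_cspan[OF fbE] cspan_superset[OF fbE]
    by (intro csubspace_diff) auto
  have w_perp: "ip e w = 0" if "e \<in> E" for e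
    using orthonormal_sum_coeff[OF E that] by (simp add: w_def p_def ip_diff_right)
  show ?thesis
  proof (cases "w = 0")
    case True
    then have "b \<in> cspan sc E" using p_span[OF E(1)] by (simp add: w_def)
    then show ?thesis using E cspan_superset[OF fbE] by blast
  next
    case False
    define e where "e = sc (of_real (1 / norm w)) w"
    have w_e: "w = sc (of_real (norm w)) e" using False by (simp add: e_def sc_mult flip: of_real_mult)
    have "norm e = 1" using False by (simp add: e_def norm_sc norm_divide)
    moreover have "ip e' e = 0" if "e' \<in> E" for e' using w_perp[OF that] by (simp add: e_def ip_sc_right)
    ultimately have on: "orthonormal (insert e E)" by (rule orthonormal_insert[OF E(2)])
    have fin: "finite (insert e E)" using E(1) by simp
    have "e \<in> cspan sc (insert b E)" using w_span csubspace_cspan[OF fbE] by (simp add: e_def csubspace_def)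
    moreover have "b \<in> cspan sc (insert e E)"
    proof -
      have "b = w + p" by (simp add: w_def)
      moreover have "w \<in> cspan sc (insert e E)"
        using csubspace_cspan[OF fin] cspan_superset[OF fin] unfolding csubspace_def
        by (metis insertI1 subsetD w_e)
      ultimately show ?thesis using p_span[OF fin] csubspace_cspan[OF fin] by (auto simp: csubspace_def)
    qed
    ultimately show ?thesis using fin on cspan_superset[OF fbE] by blast
  qed
qed

lemma gram_schmidt:
  assumes "finite B"
  shows "\<exists>E. finite E \<and> orthonormal E \<and> E \<subseteq> cspan sc B \<and> B \<subseteq> cspan sc E"
  using assms
proof (induction B rule: finite_induct)
  case empty
  show ?case by (intro exI[of _ "{}"]) (auto simp: orthonormal_def cspan_def)
next
  case (insert b B)
  then obtain E where E: "finite E" "orthonormal E" "E \<subseteq> cspan sc B" "B \<subseteq> cspan sc E" by blast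
  obtain E' where E': "finite E'" "orthonormal E'" "E \<subseteq> E'" "E' \<subseteq> cspan sc (insert b E)" "b \<in> cspan sc E'"
    using orthonormal_extend[OF E(1,2)] by blast
  have fin: "finite (insert b B)" using insert(1) by simp
  have "cspan sc (insert b E) \<subseteq> cspan sc (insert b B)"
    using E(3) cspan_minimal[OF csubspace_cspan[OF insert(1)]] cspan_superset[OF fin]
      cspan_minimal[OF csubspace_cspan[OF fin], of "insert b E"]
      cspan_minimal[OF csubspace_cspan[OF fin], of B]
    by blast
  moreover have "B \<subseteq> cspan sc E'"
    using E(4) E'(3) cspan_minimal[OF csubspace_cspan[OF E'(1)], of E] cspan_superset[OF E'(1)] by blast
  ultimately show ?case using E' by blast
qed

section \<open>Decay of matrix coefficients\<close>

lemma unitary_opD: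
  assumes "unitary_op sc ip T"
  shows "bounded_op sc T" "\<And>a b. ip (T a) (T b) = ip a b" "\<And>v. norm (T v) = norm v"
    "\<And>v. inv_into UNIV T (T v) = v" "\<And>v. T (inv_into UNIV T v) = v"
    "bounded_op sc (inv_into UNIV T)"
proof -
  show bo: "bounded_op sc T" and ipp: "\<And>a b. ip (T a) (T b) = ip a b"
    using assms by (auto simp: unitary_op_def)
  show nT: "norm (T v) = norm v" for v
    using ipp[of v v] by (simp add: norm_power2_ip flip: power2_eq_iff_nonneg)
  have inj: "inj T"
  proof (rule injI)
    fix a b assume "T a = T b"
    then have "T (a - b) = 0" by (simp add: bounded_op_diff[OF bo])
    then show "a = b" using nT[of "a - b"] by simp
  qed
  show ri: "T (inv_into UNIV T v) = v" for v
    using assms by (simp add: unitary_op_def surj_f_inv_f)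
  show "inv_into UNIV T (T v) = v" for v using inj by simp
  show "bounded_op sc (inv_into UNIV T)"
    unfolding bounded_op_def
  proof (intro conjI allI exI)
    show "inv_into UNIV T (x + y) = inv_into UNIV T x + inv_into UNIV T y" for x y
      by (rule injD[OF inj]) (simp add: ri bounded_opD[OF bo])
    show "inv_into UNIV T (sc a x) = sc a (inv_into UNIV T x)" for a x
      by (rule injD[OF inj]) (simp add: ri bounded_opD[OF bo])
    show "norm (inv_into UNIV T x) \<le> 1 * norm x" for x by (metis nT ri order_refl mult_1)
  qed
qed

lemma in_C1_preserves_domain:
  assumes SA: "self_adjoint sc ip DA A" and S: "in_C1 sc ip DA A S" and b: "b \<in> DA"
  shows "S b \<in> DA"
proof -
  have "\<forall>a\<in>DA. ip (A a) (S b) = ip a (S (A b) + commutator sc ip DA A S b)"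
    using commutator_characterization(2)[OF SA S _ b] by (simp add: ip_add_right)
  then show ?thesis using self_adjointD(5)[OF SA] by blast
qed

definition hermitian :: "('h \<Rightarrow> 'h) \<Rightarrow> bool" where
  "hermitian T \<longleftrightarrow> (\<forall>v w. ip (T v) w = ip v (T w))"

lemma hermitian_scaleR: "hermitian T \<Longrightarrow> hermitian (\<lambda>v. r *\<^sub>R T v)"
  by (simp add: hermitian_def ip_scaleR_left ip_scaleR_right)

lemma hermitian_tendsto:
  assumes "F \<noteq> bot" "\<And>v. ((\<lambda>j. T j v) \<longlongrightarrow> D v) F" "\<And>j. hermitian (T j)"
  shows "hermitian D"
  unfolding hermitian_def
proof (intro allI)
  fix v w
  have "((\<lambda>j. ip (T j v) w) \<longlongrightarrow> ip (D v) w) F" by (intro tendsto_ip assms(2) tendsto_const)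
  moreover have "((\<lambda>j. ip (T j v) w) \<longlongrightarrow> ip v (D w)) F"
    using assms(3) unfolding hermitian_def by (simp add: tendsto_ip assms(2))
  ultimately show "ip (D v) w = ip v (D w)" using assms(1) tendsto_unique by blast
qed

lemma hermitian_commutator_mult_inverse:
  assumes SA: "self_adjoint sc ip DA A" and S: "in_C1 sc ip DA A S" and U: "unitary_op sc ip S"
  shows "hermitian (\<lambda>v. commutator sc ip DA A S (inv_into UNIV S v))"
proof -
  define B where "B = commutator sc ip DA A S"
  note DA = self_adjointD[OF SA]
  note B = commutator_characterization[OF SA S, folded B_def]
  note Su = unitary_opD[OF U]
  have SDA: "S a \<in> DA" if "a \<in> DA" for a by (rule in_C1_preserves_domain[OF SA S that])
  have on_image: "ip (B a) (S b) = ip (S a) (B b)" if a: "a \<in> DA" and b: "b \<in> DA" for a b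
  proof -
    have "ip (B a) (S b) = cnj (ip (S b) (B a))" by (rule ip_cnj)
    also have "ip (S b) (B a) = ip (A (S b)) (S a) - ip b (A a)"
      using B(2) SDA a b Su(2) by simp
    also have "cnj (ip (A (S b)) (S a) - ip b (A a)) = ip (S a) (A (S b)) - ip (A a) b"
      by (simp add: ip_cnj[of "S a"] ip_cnj[of "A a"])
    also have "\<dots> = ip (A (S a)) (S b) - ip a (A b)"
      using DA(6) SDA a b by simp
    also have "\<dots> = ip (S a) (B b)"
      using B(2) SDA a b Su(2) by simp
    finally show ?thesis .
  qed
  have dense: "closure (S ` DA) = UNIV"
  proof -
    have "S ` closure DA \<subseteq> closure (S ` DA)"
      by (rule continuous_image_closure_subset[OF bounded_op_continuous[OF Su(1)]]) simp
    moreover have "range S = UNIV" using Su(5) by (metis surjI surj_def)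
    ultimately show ?thesis using DA(2) by auto
  qed
  have cont: "continuous_on UNIV (\<lambda>v. B (inv_into UNIV S v))"
    using bounded_op_continuous[OF B(1)] bounded_op_continuous[OF Su(6)]
    by (auto intro: continuous_on_compose2)
  have image_right: "ip (B (inv_into UNIV S v)) w = ip v (B (inv_into UNIV S w))" if "w \<in> S ` DA" for v w
    by (rule eq_on_dense[OF dense, where f="\<lambda>v. ip (B (inv_into UNIV S v)) w" and g="\<lambda>v. ip v (B (inv_into UNIV S w))"])
      (use on_image that in \<open>auto simp: Su(4) intro!: continuous_on_ip continuous_intros cont\<close>)
  have "ip (B (inv_into UNIV S v)) w = ip v (B (inv_into UNIV S w))" for v w
    by (rule eq_on_dense[OF dense, where f="\<lambda>w. ip (B (inv_into UNIV S v)) w" and g="\<lambda>w. ip v (B (inv_into UNIV S w))"])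
      (use image_right in \<open>auto intro!: continuous_on_ip continuous_intros cont\<close>)
  then show ?thesis by (simp add: hermitian_def B_def)
qed

lemma commutator_coefficient_bound:
  assumes SA: "self_adjoint sc ip DA A" and S: "in_C1 sc ip DA A S" and U: "unitary_op sc ip S"
    and "a \<in> DA" "b \<in> DA"
  shows "cmod (ip a (commutator sc ip DA A S b)) \<le> norm (A a) * norm b + norm a * norm (A b)"
proof -
  have "cmod (ip a (commutator sc ip DA A S b)) \<le> cmod (ip (A a) (S b)) + cmod (ip a (S (A b)))"
    using commutator_characterization(2)[OF SA S assms(4,5)] by (simp add: norm_triangle_ineq4)
  also have "\<dots> \<le> norm (A a) * norm (S b) + norm a * norm (S (A b))"
    by (intro add_mono cauchy_schwarz)
  finally show ?thesis by (simp add: unitary_opD(3)[OF U])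
qed

definition vanishing_coefficients :: "'j filter \<Rightarrow> ('j \<Rightarrow> 'h \<Rightarrow> 'h) \<Rightarrow> 'h set" where
  "vanishing_coefficients F V = {u. \<forall>\<psi>. ((\<lambda>j. ip u (V j \<psi>)) \<longlongrightarrow> 0) F}"

lemma csubspace_vanishing_coefficients: "csubspace (vanishing_coefficients F V)"
  unfolding csubspace_def vanishing_coefficients_def
  by (auto simp: ip_add_left ip_sc_left intro!: tendsto_add_zero tendsto_mult_right_zero)

lemma closed_vanishing_coefficients:
  assumes V: "\<And>j \<psi>. norm (V j \<psi>) \<le> norm \<psi>"
  shows "closed (vanishing_coefficients F V)"
proof -
  have "u \<in> vanishing_coefficients F V" if u: "u \<in> closure (vanishing_coefficients F V)" for u
    unfolding vanishing_coefficients_def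
  proof (intro CollectI allI tendsto_zero_if_uniformly_approximable)
    fix \<psi> :: 'h and e :: real assume e: "e > 0"
    then have e': "e / (norm \<psi> + 1) > 0" by (simp add: add_nonneg_pos)
    then obtain y where y: "y \<in> vanishing_coefficients F V" "dist y u < e / (norm \<psi> + 1)"
      using u unfolding closure_approachable by blast
    show "\<exists>g. (g \<longlongrightarrow> 0) F \<and> (\<forall>j. norm (ip u (V j \<psi>) - g j) \<le> e)"
    proof (intro exI conjI allI)
      show "((\<lambda>j. ip y (V j \<psi>)) \<longlongrightarrow> 0) F" using y(1) by (simp add: vanishing_coefficients_def)
      fix j
      have "norm (ip u (V j \<psi>) - ip y (V j \<psi>)) \<le> norm (u - y) * norm (V j \<psi>)"
        using cauchy_schwarz[of "u - y" "V j \<psi>"] by (simp add: ip_diff_left)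
      also have "\<dots> \<le> (e / (norm \<psi> + 1)) * (norm \<psi> + 1)"
        using y(2) e' V[of j \<psi>] by (intro mult_mono) (auto simp: dist_norm norm_minus_commute)
      finally show "norm (ip u (V j \<psi>) - ip y (V j \<psi>)) \<le> e"
        using norm_ge_zero[of \<psi>] by simp
    qed
  qed
  then show ?thesis using closure_subset_eq by blast
qed

lemma in_vanishing_coefficients_if_dense:
  assumes E: "closure E = UNIV" and V: "\<And>j. bounded_op sc (V j)" "\<And>j \<psi>. norm (V j \<psi>) \<le> norm \<psi>"
    and lim: "\<And>\<psi>. \<psi> \<in> E \<Longrightarrow> ((\<lambda>j. ip u (V j \<psi>)) \<longlongrightarrow> 0) F"
  shows "u \<in> vanishing_coefficients F V"
  unfolding vanishing_coefficients_def
proof (intro CollectI allI tendsto_zero_if_uniformly_approximable)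
  fix \<psi> and e :: real assume e: "e > 0"
  then have e': "e / (norm u + 1) > 0" by (simp add: add_nonneg_pos)
  then obtain \<psi>' where \<psi>': "\<psi>' \<in> E" "dist \<psi>' \<psi> < e / (norm u + 1)"
    using E closure_approachable by blast
  show "\<exists>g. (g \<longlongrightarrow> 0) F \<and> (\<forall>j. norm (ip u (V j \<psi>) - g j) \<le> e)"
  proof (intro exI conjI allI)
    show "((\<lambda>j. ip u (V j \<psi>')) \<longlongrightarrow> 0) F" by (rule lim[OF \<psi>'(1)])
    fix j
    have "norm (ip u (V j \<psi>) - ip u (V j \<psi>')) \<le> norm u * norm (V j (\<psi> - \<psi>'))"
      using cauchy_schwarz[of u "V j (\<psi> - \<psi>')"] by (simp add: ip_diff_right bounded_op_diff[OF V(1)])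
    also have "\<dots> \<le> (norm u + 1) * (e / (norm u + 1))"
      using \<psi>'(2) V(2)[of j "\<psi> - \<psi>'"] by (intro mult_mono) (auto simp: dist_norm norm_minus_commute)
    finally show "norm (ip u (V j \<psi>) - ip u (V j \<psi>')) \<le> e"
      using norm_ge_zero[of u] by simp
  qed
qed

lemma kernel_perp_subset_closed_csubspace:
  assumes D: "hermitian D" and DA: "closure DA = UNIV"
    and M: "csubspace M" "closed M" and range: "\<And>a. a \<in> DA \<Longrightarrow> D a \<in> M"
  shows "kernel_perp ip D \<subseteq> M"
proof
  fix \<phi> assume \<phi>: "\<phi> \<in> kernel_perp ip D"
  obtain m where m: "m \<in> M" "\<And>u. u \<in> M \<Longrightarrow> ip u (\<phi> - m) = 0"
    using orthogonal_projection_exists[OF M] by blast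
  define r where "r = \<phi> - m"
  have "D r = 0"
  proof (rule eq_if_ip_eq_on_dense[OF DA])
    fix a assume "a \<in> DA"
    then have "ip (D a) r = 0" using m(2) range by (simp add: r_def)
    then show "ip a (D r) = ip a 0" using D by (simp add: hermitian_def)
  qed
  then have "ip r \<phi> = 0" using \<phi> by (simp add: kernel_perp_def)
  moreover have "ip r m = 0" using m ip_cnj[of r m] by (simp add: r_def)
  ultimately have "ip r r = 0" by (simp add: r_def ip_diff_right)
  then show "\<phi> \<in> M" using m(1) by (simp add: ip_self_eq_0 r_def)
qed

lemma invariant_finite_span_trivial:
  assumes F: "F \<noteq> bot" and B: "finite B" and van: "cspan sc B \<subseteq> vanishing_coefficients F V"
    and inv: "\<And>j. V j ` cspan sc B \<subseteq> cspan sc B" and iso: "\<And>j \<psi>. norm (V j \<psi>) = norm \<psi>"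
    and \<psi>: "\<psi> \<in> cspan sc B"
  shows "\<psi> = 0"
proof -
  obtain E where E: "finite E" "orthonormal E" "E \<subseteq> cspan sc B" "B \<subseteq> cspan sc E"
    using gram_schmidt[OF B] by blast
  have VE: "V j \<psi> \<in> cspan sc E" for j
    using inv \<psi> cspan_minimal[OF csubspace_cspan[OF E(1)] E(4)] by blast
  have "((\<lambda>j. \<Sum>e\<in>E. sc (ip e (V j \<psi>)) e) \<longlongrightarrow> (\<Sum>e\<in>E. sc 0 e)) F"
    using E(3) van by (intro tendsto_sum tendsto_sc_left) (auto simp: vanishing_coefficients_def)
  then have "((\<lambda>j. V j \<psi>) \<longlongrightarrow> 0) F"
    using orthonormal_expansion[OF E(1,2) VE] by simp
  then have "((\<lambda>j. norm \<psi>) \<longlongrightarrow> 0) F" using tendsto_norm_zero iso by fastforce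
  then show "\<psi> = 0" using tendsto_unique[OF F tendsto_const] by fastforce
qed

lemma commutator_range_vanishing_coefficients:
  assumes SA: "self_adjoint sc ip DA A"
    and S: "\<And>j. in_C1 sc ip DA A (V j)" "\<And>j. unitary_op sc ip (V j)"
    and L: "((\<lambda>j. 1 / L j) \<longlongrightarrow> 0) F"
    and lim: "\<And>\<psi>. ((\<lambda>j. (1 / L j) *\<^sub>R commutator sc ip DA A (V j) (inv_into UNIV (V j) \<psi>)) \<longlongrightarrow> D \<psi>) F"
    and \<phi>: "\<phi> \<in> DA"
  shows "D \<phi> \<in> vanishing_coefficients F V"
proof (rule in_vanishing_coefficients_if_dense[OF self_adjointD(2)[OF SA]])
  fix \<psi> assume \<psi>: "\<psi> \<in> DA"
  define Dj where "Dj j v = (1 / L j) *\<^sub>R commutator sc ip DA A (V j) (inv_into UNIV (V j) v)" for j v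
  define C where "C = norm (A \<phi>) * norm \<psi> + norm \<phi> * norm (A \<psi>)"
  \<comment> \<open>by symmetry of Dj j, the coefficient is 1 / L j times a commutator matrix element\<close>
  have "ip (Dj j \<phi>) (V j \<psi>) = (1 / L j) *\<^sub>R ip \<phi> (commutator sc ip DA A (V j) \<psi>)" for j
    using hermitian_scaleR[OF hermitian_commutator_mult_inverse[OF SA S(1,2)], of "1 / L j"]
    by (simp add: hermitian_def Dj_def unitary_opD(4)[OF S(2)] ip_scaleR_right)
  then have bound: "norm (ip (Dj j \<phi>) (V j \<psi>)) \<le> \<bar>1 / L j\<bar> * C" for j
    using commutator_coefficient_bound[OF SA S(1,2) \<phi> \<psi>]
    by (simp add: C_def divide_right_mono)
  have "((\<lambda>j. ip (Dj j \<phi>) (V j \<psi>)) \<longlongrightarrow> 0) F"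
  proof (rule Lim_null_comparison)
    show "eventually (\<lambda>j. norm (ip (Dj j \<phi>) (V j \<psi>)) \<le> \<bar>1 / L j\<bar> * C) F"
      using bound by (intro always_eventually allI)
    show "((\<lambda>j. \<bar>1 / L j\<bar> * C) \<longlongrightarrow> 0) F"
      by (intro tendsto_mult_left_zero tendsto_rabs_zero L)
  qed
  moreover have "((\<lambda>j. ip (D \<phi> - Dj j \<phi>) (V j \<psi>)) \<longlongrightarrow> 0) F"
  proof (rule Lim_null_comparison)
    have "norm (ip (D \<phi> - Dj j \<phi>) (V j \<psi>)) \<le> norm (D \<phi> - Dj j \<phi>) * norm \<psi>" for j
      using cauchy_schwarz[of "D \<phi> - Dj j \<phi>" "V j \<psi>"] by (simp add: unitary_opD(3)[OF S(2)])
    then show "eventually (\<lambda>j. norm (ip (D \<phi> - Dj j \<phi>) (V j \<psi>)) \<le> norm (D \<phi> - Dj j \<phi>) * norm \<psi>) F"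
      by (intro always_eventually allI)
    have "((\<lambda>j. D \<phi> - Dj j \<phi>) \<longlongrightarrow> D \<phi> - D \<phi>) F"
      using lim[of \<phi>] unfolding Dj_def by (intro tendsto_diff tendsto_const)
    then show "((\<lambda>j. norm (D \<phi> - Dj j \<phi>) * norm \<psi>) \<longlongrightarrow> 0) F"
      by (intro tendsto_mult_left_zero tendsto_norm_zero) simp
  qed
  ultimately show "((\<lambda>j. ip (D \<phi>) (V j \<psi>)) \<longlongrightarrow> 0) F"
    using tendsto_add_zero[of "\<lambda>j. ip (D \<phi> - Dj j \<phi>) (V j \<psi>)" F "\<lambda>j. ip (Dj j \<phi>) (V j \<psi>)"]
    by (simp add: ip_diff_left)
qed (use unitary_opD[OF S(2)] in auto)

end

theorem theorem2p3:
  fixes G :: "('g, 'b) monoid_scheme" and T :: "'g topology" and len :: "'g \<Rightarrow> real"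
    and sc :: "complex \<Rightarrow> 'h::banach \<Rightarrow> 'h" and ip :: "'h \<Rightarrow> 'h \<Rightarrow> complex"
    and U :: "'g \<Rightarrow> 'h \<Rightarrow> 'h" and x :: "'j \<Rightarrow> 'g" and F :: "'j filter"
    and DA :: "'h set" and A :: "'h \<Rightarrow> 'h" and D :: "'h \<Rightarrow> 'h"
  assumes "topological_group G T"
    and "proper_length G T len"
    and "complex_hilbert sc ip"
    and "unitary_rep G T sc ip U"
    and "F \<noteq> bot" and "\<forall>j. x j \<in> carrier G"
    and "diverges_to_infinity T x F"
    and "self_adjoint sc ip DA A"
    and "\<forall>j. in_C1 sc ip DA A (U (x j))"
    and "\<forall>\<psi>. ((\<lambda>j. (1 / len (x j)) *\<^sub>R
                 commutator sc ip DA A (U (x j)) (inv_into UNIV (U (x j)) \<psi>)) \<longlongrightarrow> D \<psi>) F"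
  shows "(\<forall>\<phi>\<in>kernel_perp ip D. \<forall>\<psi>. ((\<lambda>j. ip \<phi> (U (x j) \<psi>)) \<longlongrightarrow> 0) F)
     \<and> \<not> (\<exists>B. finite B \<and> cspan sc B \<subseteq> kernel_perp ip D \<and> cspan sc B \<noteq> {0}
             \<and> (\<forall>y\<in>carrier G. U y ` cspan sc B \<subseteq> cspan sc B))"
proof -
  interpret hilbert_space sc ip by (rule hilbert_space.intro) (rule assms(3))
  define V where "V j = U (x j)" for j
  have unitary: "unitary_op sc ip (V j)" for j
    using assms(4,6) by (simp add: unitary_rep_def V_def)
  have C1: "in_C1 sc ip DA A (V j)" for j using assms(9) by (simp add: V_def)
  have lim: "((\<lambda>j. (1 / len (x j)) *\<^sub>R commutator sc ip DA A (V j) (inv_into UNIV (V j) \<psi>)) \<longlongrightarrow> D \<psi>) F"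
    for \<psi> using assms(10) by (simp add: V_def)
  have herm: "hermitian D"
    by (rule hermitian_tendsto[OF assms(5) lim])
      (rule hermitian_scaleR[OF hermitian_commutator_mult_inverse[OF assms(8) C1 unitary]])
  have inverse_len: "((\<lambda>j. 1 / len (x j)) \<longlongrightarrow> 0) F"
    using tendsto_inverse_0_at_top[OF proper_length_tendsto_at_top[OF assms(1,2,6,7)]]
    by (simp add: inverse_eq_divide)
  have decay: "kernel_perp ip D \<subseteq> vanishing_coefficients F V"
  proof (rule kernel_perp_subset_closed_csubspace[OF herm self_adjointD(2)[OF assms(8)]
        csubspace_vanishing_coefficients])
    show "closed (vanishing_coefficients F V)"
      by (rule closed_vanishing_coefficients) (simp add: unitary_opD(3)[OF unitary])
    show "D a \<in> vanishing_coefficients F V" if "a \<in> DA" for a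
      by (rule commutator_range_vanishing_coefficients[OF assms(8) C1 unitary inverse_len lim that])
  qed
  moreover have "cspan sc B = {0}"
    if "finite B" "cspan sc B \<subseteq> kernel_perp ip D" "\<forall>y\<in>carrier G. U y ` cspan sc B \<subseteq> cspan sc B" for B
    using that decay invariant_finite_span_trivial[OF assms(5), of B V] csubspace_cspan[of B]
      unitary_opD(3)[OF unitary] assms(6)
    by (auto simp: V_def csubspace_def)
  ultimately show ?thesis unfolding vanishing_coefficients_def V_def by blast
qed

end
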